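(* Let $n,f$ be positive integers such that $2^{f/2}=O(n)$. Any $f$-FDO with an arbitrary finite stretch for $n$-vertex directed graphs requires $\Omega(2^{f/2}\, n)$ bits of space, regardless of the query time.
   Context: For a directed graph $G=(V,E)$ and $F\subseteq E$, $G-F$ is $G$ with the edges of $F$ removed; $\mathrm{diam}(H)=\max_{s,t} d_H(s,t)$, which is $+\infty$ if $H$ is not strongly connected. An $f$-FDO ($f$-edge fault-tolerant diameter oracle) for $G$ is a data structure built from $G$ that, on query a set $F\subseteq E$ with $|F|\le f$, returns a value $\widehat{D}(F)$; it has stretch $\sigma\ge 1$ if always $\mathrm{diam}(G-F)\le \widehat{D}(F)\le \sigma\cdot \mathrm{diam}(G-F)$. A finite stretch $\sigma$ in particular forces $\widehat D(F)=+\infty$ exactly when $\mathrm{diam}(G-F)=+\infty$. *)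

theory Defs
  imports Complex_Main "HOL-Library.Extended_Real"
begin

definition digraph :: "nat \<Rightarrow> (nat \<times> nat) set \<Rightarrow> bool" where
  "digraph n E \<longleftrightarrow> E \<subseteq> {0..<n} \<times> {0..<n} \<and> (\<forall>v. (v, v) \<notin> E)"

definition dist_g :: "(nat \<times> nat) set \<Rightarrow> nat \<Rightarrow> nat \<Rightarrow> enat" where
  "dist_g E s t = (INF k \<in> {k. (s, t) \<in> E ^^ k}. enat k)"

definition diam_g :: "nat \<Rightarrow> (nat \<times> nat) set \<Rightarrow> enat" where
  "diam_g n E = (SUP s \<in> {0..<n}. SUP t \<in> {0..<n}. dist_g E s t)"

text \<open>An f-FDO with stretch sigma for n-vertex digraphs, modelled information-theoretically:
  a bit-string encoding of each graph, and an arbitrary (unbounded time) query function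
  answering from the encoding alone.\<close>
definition is_FDO ::
  "nat \<Rightarrow> nat \<Rightarrow> real \<Rightarrow> ((nat \<times> nat) set \<Rightarrow> bool list)
     \<Rightarrow> (bool list \<Rightarrow> (nat \<times> nat) set \<Rightarrow> ereal) \<Rightarrow> bool" where
  "is_FDO n f \<sigma> enc Q \<longleftrightarrow>
     (\<forall>E F. digraph n E \<and> F \<subseteq> E \<and> card F \<le> f \<longrightarrow>
        ereal_of_enat (diam_g n (E - F)) \<le> Q (enc E) F \<and>
        Q (enc E) F \<le> ereal \<sigma> * ereal_of_enat (diam_g n (E - F)))"

end

theory Submission
  imports Defs "HOL-Library.Discrete_Functions"
begin

(* An encoding argument. A gadget of size K = 2^h consists of an out-tree and an in-tree of
   height h, an arbitrary set of edges from out-leaves to in-leaves (a K x K bit matrix), and a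
   bypass from the out-root to the in-root. Failing the bypass and the at most 2h tree edges that
   leave the root-leaf paths of out-leaf i and in-leaf j, the in-root stays reachable from the
   out-root iff bit (i, j) is present. Attaching P ~ n / (4K) gadgets to a hub vertex, this is
   the difference between a strongly connected residual graph and one of infinite diameter, which
   an oracle of finite stretch has to tell apart once f >= 2h + 1. So the 2^(P K^2) resulting
   graphs have pairwise distinct encodings, one of which has at least P K^2 ~ n K / 4 bits.
   Taking K as large as both 2h + 1 <= f and 8K < n allow yields the bound when 2^(f/2) = O(n). *)

section \<open>Diameters and fault-tolerant oracles\<close>

lemma dist_g_eq_infinity_iff: "dist_g E s t = \<infinity> \<longleftrightarrow> (s, t) \<notin> E\<^sup>*"
proof (cases "(s, t) \<in> E\<^sup>*")
  case True
  then obtain k where "(s, t) \<in> E ^^ k" by (auto simp: rtrancl_power)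
  then have "dist_g E s t \<le> enat k" unfolding dist_g_def by (intro INF_lower) auto
  then show ?thesis using True enat_ile by fastforce
next
  case False
  then show ?thesis unfolding dist_g_def rtrancl_power by (simp add: top_enat_def)
qed

lemma Sup_finite_enat_eq_infinity_iff:
  fixes A :: "enat set"
  assumes "finite A"
  shows "Sup A = \<infinity> \<longleftrightarrow> \<infinity> \<in> A"
proof
  assume "Sup A = \<infinity>"
  then have "A \<noteq> {}" by (auto simp: bot_enat_def)
  then show "\<infinity> \<in> A" using \<open>Sup A = \<infinity>\<close> Max_in[OF assms] by (simp add: Sup_enat_def assms)
next
  assume "\<infinity> \<in> A"
  then have "\<infinity> \<le> Sup A" by (rule Sup_upper)
  then show "Sup A = \<infinity>" by simp
qed

lemma diam_g_eq_infinity_iff: "diam_g n E = \<infinity> \<longleftrightarrow> (\<exists>s<n. \<exists>t<n. (s, t) \<notin> E\<^sup>*)"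
proof -
  have inner: "(SUP t\<in>{0..<n}. dist_g E s t) = \<infinity> \<longleftrightarrow> (\<exists>t<n. (s, t) \<notin> E\<^sup>*)" for s
    by (auto simp: Sup_finite_enat_eq_infinity_iff image_iff eq_commute[of \<infinity>]
        simp flip: dist_g_eq_infinity_iff)
  show ?thesis
    unfolding diam_g_def
    by (auto simp: Sup_finite_enat_eq_infinity_iff image_iff eq_commute[of \<infinity>] inner)
qed

text \<open>Only the finiteness of the stretch matters here, not the condition 1 \<le> \<sigma>.\<close>

lemma is_FDO_eq_infinity_iff:
  assumes "is_FDO n f \<sigma> enc Q" "digraph n E" "F \<subseteq> E" "card F \<le> f"
  shows "Q (enc E) F = \<infinity> \<longleftrightarrow> diam_g n (E - F) = \<infinity>"
proof -
  have lower: "ereal_of_enat (diam_g n (E - F)) \<le> Q (enc E) F"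
    and upper: "Q (enc E) F \<le> ereal \<sigma> * ereal_of_enat (diam_g n (E - F))"
    using assms unfolding is_FDO_def by blast+
  show ?thesis
  proof (cases "diam_g n (E - F)")
    case (enat k)
    then show ?thesis using upper by auto
  next
    case infinity
    then show ?thesis using lower by simp
  qed
qed

lemma is_FDO_distinguishes:
  assumes "is_FDO n f \<sigma> enc Q" "digraph n E\<^sub>1" "digraph n E\<^sub>2" "F \<subseteq> E\<^sub>1" "F \<subseteq> E\<^sub>2" "card F \<le> f"
    and "diam_g n (E\<^sub>1 - F) \<noteq> \<infinity>" "diam_g n (E\<^sub>2 - F) = \<infinity>"
  shows "enc E\<^sub>1 \<noteq> enc E\<^sub>2"
  using assms is_FDO_eq_infinity_iff[OF assms(1)] by metis

lemma card_bool_lists_shorter: "card {xs :: bool list. length xs < M} < 2 ^ M"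
proof (cases M)
  case (Suc m)
  have "{xs :: bool list. length xs < M} = {xs. set xs \<subseteq> UNIV \<and> length xs \<le> m}"
    using Suc by auto
  then have "card {xs :: bool list. length xs < M} = (\<Sum>i<Suc m. 2 ^ i)"
    using card_lists_length_le[of "UNIV :: bool set" m] by (simp add: lessThan_Suc_atMost)
  also have "\<dots> = 2 ^ M - 1"
    using sum_power2[of "Suc m"] Suc by (simp add: atLeast0LessThan)
  finally show ?thesis by simp
qed simp

lemma inj_on_bool_list_long:
  assumes "inj_on g X" "card X = 2 ^ M"
  shows "\<exists>x\<in>X. M \<le> length (g x :: bool list)"
proof (rule ccontr)
  assume "\<not> ?thesis"
  then have "g ` X \<subseteq> {xs. length xs < M}" by auto
  moreover have "finite {xs :: bool list. length xs < M}"
    by (rule finite_subset[OF _ finite_lists_length_le[of UNIV M]]) auto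
  ultimately have "card X \<le> card {xs :: bool list. length xs < M}"
    using card_mono card_image[OF assms(1)] by metis
  then show False using card_bool_lists_shorter[of M] assms(2) by simp
qed

lemma rtrancl_predecessor_closed:
  assumes "(x, y) \<in> R\<^sup>*" "y \<in> A" "\<And>u v. (u, v) \<in> R \<Longrightarrow> v \<in> A \<Longrightarrow> u \<in> A"
  shows "x \<in> A"
  using assms(1,2) by (induction rule: converse_rtrancl_induct) (auto intro: assms(3))

section \<open>Heap-numbered trees\<close>

text \<open>The root is 1, the parent of node s is s div 2, and a tree of height h has the leaves
  2^h ..< 2^(h+1).\<close>

definition heap_ancestors :: "nat \<Rightarrow> nat set" where
  "heap_ancestors l = {l div 2 ^ k | k. 0 < l div 2 ^ k}"

lemma heap_ancestors_self: "0 < l \<Longrightarrow> l \<in> heap_ancestors l"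
  unfolding heap_ancestors_def by (auto intro: exI[of _ 0])

lemma heap_ancestors_bounds: "x \<in> heap_ancestors l \<Longrightarrow> 0 < x \<and> x \<le> l"
  unfolding heap_ancestors_def by auto

lemma heap_ancestors_parent:
  assumes "x \<in> heap_ancestors l" "2 \<le> x"
  shows "x div 2 \<in> heap_ancestors l"
proof -
  obtain k where "x = l div 2 ^ k" using assms(1) unfolding heap_ancestors_def by auto
  then have "x div 2 = l div 2 ^ Suc k" by (metis div_mult2_eq power_Suc2)
  then show ?thesis using assms(2) unfolding heap_ancestors_def by fastforce
qed

lemma root_in_heap_ancestors:
  assumes "2 ^ h \<le> l" "l < 2 * 2 ^ h"
  shows "1 \<in> heap_ancestors l"
proof -
  have "0 < l div 2 ^ h" using assms(1) by (simp add: div_greater_zero_iff)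
  moreover have "l div 2 ^ h < 2" using assms(2) by (simp add: div_less_iff_less_mult)
  ultimately have "l div 2 ^ h = 1" by simp
  then show ?thesis unfolding heap_ancestors_def by (auto intro!: exI[of _ h])
qed

lemma heap_ancestors_leaf:
  assumes "x \<in> heap_ancestors l" "l < 2 * K" "K \<le> x"
  shows "x = l"
proof -
  obtain k where k: "x = l div 2 ^ k" using assms(1) unfolding heap_ancestors_def by auto
  show ?thesis
  proof (cases k)
    case (Suc m)
    have "x \<le> l div 2" using k Suc by (simp add: div_le_mono div_mult2_eq)
    then show ?thesis using assms(2,3) by linarith
  qed (use k in simp)
qed

definition heap_sibling :: "nat \<Rightarrow> nat" where
  "heap_sibling y = (if even y then y + 1 else y - 1)"

lemma heap_sibling_eqI: "x div 2 = y div 2 \<Longrightarrow> x \<noteq> y \<Longrightarrow> x = heap_sibling y"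
  unfolding heap_sibling_def by presburger

definition off_path_children :: "nat \<Rightarrow> nat \<Rightarrow> nat set" where
  "off_path_children K l =
     {s. s < 2 * K \<and> s div 2 \<in> heap_ancestors l \<and> s \<notin> heap_ancestors l}"

lemma off_path_children_subset:
  assumes K: "K = 2 ^ h" and l: "K \<le> l" "l < 2 * K"
  shows "off_path_children K l \<subseteq> (\<lambda>k. heap_sibling (l div 2 ^ k)) ` {..<h}"
proof
  fix s
  assume "s \<in> off_path_children K l"
  then have s: "s < 2 * K" "s div 2 \<in> heap_ancestors l" "s \<notin> heap_ancestors l"
    unfolding off_path_children_def by auto
  obtain m where m: "s div 2 = l div 2 ^ m" "0 < l div 2 ^ m"
    using s(2) unfolding heap_ancestors_def by auto
  obtain k where k: "m = Suc k"
    using m s(1) l by (cases m) auto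
  have "2 ^ m \<le> l" using m(2) by (simp add: div_greater_zero_iff)
  then have "(2::nat) ^ m < 2 ^ Suc h" using l K by simp
  then have "m < Suc h" by (rule power_less_imp_less_exp[rotated]) simp
  define y where "y = l div 2 ^ k"
  have y_parent: "y div 2 = l div 2 ^ m" unfolding y_def k by (metis div_mult2_eq power_Suc2)
  then have "0 < y" using m(2) by auto
  then have "y \<in> heap_ancestors l" unfolding heap_ancestors_def y_def by blast
  then have "s \<noteq> y" using s(3) by blast
  then have "s = heap_sibling y" using heap_sibling_eqI y_parent m(1) by simp
  then show "s \<in> (\<lambda>k. heap_sibling (l div 2 ^ k)) ` {..<h}"
    using \<open>m < Suc h\<close> k unfolding y_def by auto
qed

lemma finite_off_path_children [simp]: "finite (off_path_children K l)"
  by (rule finite_subset[of _ "{..<2 * K}"]) (auto simp: off_path_children_def)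

lemma card_off_path_children:
  assumes "K = 2 ^ h" "K \<le> l" "l < 2 * K"
  shows "card (off_path_children K l) \<le> h"
proof -
  have "card (off_path_children K l) \<le> card ((\<lambda>k. heap_sibling (l div 2 ^ k)) ` {..<h})"
    by (rule card_mono) (use off_path_children_subset[OF assms] in auto)
  also have "\<dots> \<le> card {..<h}" by (rule card_image_le) simp
  finally show ?thesis by simp
qed

section \<open>The gadget\<close>

text \<open>Offsets 1 ..< 2K carry the out-tree and 2K + (1 ..< 2K) the in-tree, both of height h
  where K = 2^h; out-leaf i is K + i and in-leaf j is 2K + (K + j). The bypass runs through
  offset 0, so that it is not the edge encoding bit (0, 0) when K = 1; offset 2K is only
  reached from the in-root.\<close>

definition gadget_edges :: "nat \<Rightarrow> (nat \<times> nat) set \<Rightarrow> (nat \<times> nat) set" where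
  "gadget_edges K B =
     {(s div 2, s) | s. 2 \<le> s \<and> s < 2 * K}
   \<union> {(2 * K + s, 2 * K + s div 2) | s. 2 \<le> s \<and> s < 2 * K}
   \<union> {(1, 0), (0, 2 * K + 1)}
   \<union> {(2 * K + 1, d) | d. d < 4 * K \<and> d \<noteq> 2 * K + 1}
   \<union> {(K + i, 2 * K + (K + j)) | i j. (i, j) \<in> B \<and> i < K \<and> j < K}"

definition gadget_faults :: "nat \<Rightarrow> nat \<Rightarrow> nat \<Rightarrow> (nat \<times> nat) set" where
  "gadget_faults K i j =
     {(s div 2, s) | s. s \<in> off_path_children K (K + i)}
   \<union> {(2 * K + s, 2 * K + s div 2) | s. s \<in> off_path_children K (K + j)}
   \<union> {(1, 0)}"

text \<open>Without bit (i, j), the offsets that the out-root cannot reach after the faults of query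
  (i, j): the out-tree off the path to K + i, and the in-tree path from K + j.\<close>

definition gadget_blocked :: "nat \<Rightarrow> nat \<Rightarrow> nat \<Rightarrow> nat set" where
  "gadget_blocked K i j =
     {s. s < 2 * K \<and> s \<notin> heap_ancestors (K + i)} \<union> (+) (2 * K) ` heap_ancestors (K + j)"

lemma gadget_edges_bounded:
  assumes "0 < K"
  shows "gadget_edges K B \<subseteq> {..<4 * K} \<times> {..<4 * K}"
  using assms unfolding gadget_edges_def by (auto; linarith)

lemma gadget_edges_irrefl: "(d, d) \<notin> gadget_edges K B"
  unfolding gadget_edges_def by auto

lemma gadget_faults_subset: "gadget_faults K i j \<subseteq> gadget_edges K B"
  unfolding gadget_faults_def gadget_edges_def off_path_children_def
  by (auto dest: heap_ancestors_bounds)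

lemma card_gadget_faults:
  assumes "K = 2 ^ h" "i < K" "j < K"
  shows "card (gadget_faults K i j) \<le> 2 * h + 1"
proof -
  have cut: "card {e s | s. s \<in> off_path_children K (K + k)} \<le> h"
    if "k < K" for e :: "nat \<Rightarrow> nat \<times> nat" and k
  proof -
    have "card {e s | s. s \<in> off_path_children K (K + k)} \<le> card (off_path_children K (K + k))"
      using card_image_le[of "off_path_children K (K + k)" e] by (simp add: setcompr_eq_image)
    also have "\<dots> \<le> h" using card_off_path_children[of K h "K + k"] assms(1) that by simp
    finally show ?thesis .
  qed
  let ?out = "{(s div 2, s) | s. s \<in> off_path_children K (K + i)}"
  let ?in = "{(2 * K + s, 2 * K + s div 2) | s. s \<in> off_path_children K (K + j)}"
  have "card (?out \<union> ?in \<union> {(1, 0)}) \<le> card (?out \<union> ?in) + card {(1 :: nat, 0 :: nat)}"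
    by (rule card_Un_le)
  also have "\<dots> \<le> card ?out + card ?in + 1" using card_Un_le[of ?out ?in] by simp
  also have "\<dots> \<le> 2 * h + 1"
    using cut[OF assms(2), of "\<lambda>s. (s div 2, s)"]
      cut[OF assms(3), of "\<lambda>s. (2 * K + s, 2 * K + s div 2)"] by simp
  finally show ?thesis unfolding gadget_faults_def .
qed

lemma heap_root_path_rtrancl:
  assumes "x \<in> heap_ancestors l" "\<And>y. y \<in> heap_ancestors l \<Longrightarrow> 2 \<le> y \<Longrightarrow> (g (y div 2), g y) \<in> R"
  shows "(g 1, g x) \<in> R\<^sup>*"
  using assms(1)
proof (induction x rule: less_induct)
  case (less x)
  show ?case
  proof (cases "x = 1")
    case False
    then have "2 \<le> x" using heap_ancestors_bounds[OF less.prems] by simp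
    then have "(g 1, g (x div 2)) \<in> R\<^sup>*"
      using less.IH heap_ancestors_parent[OF less.prems] by simp
    then show ?thesis using assms(2)[OF less.prems \<open>2 \<le> x\<close>] by (rule rtrancl_into_rtrancl)
  qed simp
qed

lemma gadget_out_root_reaches_in_root:
  assumes K: "K = 2 ^ h" and ij: "i < K" "j < K" "(i, j) \<in> B"
  shows "(1, 2 * K + 1) \<in> (gadget_edges K B - gadget_faults K i j)\<^sup>*"
proof -
  let ?R = "gadget_edges K B - gadget_faults K i j"
  have "(y div 2, y) \<in> ?R" if "y \<in> heap_ancestors (K + i)" "2 \<le> y" for y
    using that ij heap_ancestors_bounds[OF that(1)]
    unfolding gadget_edges_def gadget_faults_def off_path_children_def by auto
  then have out_path: "(1, K + i) \<in> ?R\<^sup>*"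
    using heap_root_path_rtrancl[of "K + i" "K + i" id] heap_ancestors_self[of "K + i"] K by simp
  have "(2 * K + y, 2 * K + y div 2) \<in> ?R" if "y \<in> heap_ancestors (K + j)" "2 \<le> y" for y
    using that ij heap_ancestors_bounds[OF that(1)]
    unfolding gadget_edges_def gadget_faults_def off_path_children_def by auto
  then have "(2 * K + 1, 2 * K + (K + j)) \<in> (?R\<inverse>)\<^sup>*"
    using heap_root_path_rtrancl[of "K + j" "K + j" "(+) (2 * K)" "?R\<inverse>"]
      heap_ancestors_self[of "K + j"] K by simp
  then have in_path: "(2 * K + (K + j), 2 * K + 1) \<in> ?R\<^sup>*"
    by (rule rtrancl_converseD)
  have bit: "(K + i, 2 * K + (K + j)) \<in> ?R"
    using ij unfolding gadget_edges_def gadget_faults_def off_path_children_def by auto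
  show ?thesis
    using out_path bit in_path by (meson rtrancl_into_rtrancl rtrancl_trans)
qed

lemma in_root_edge_notin_gadget_faults:
  assumes "0 < K"
  shows "(2 * K + 1, d) \<notin> gadget_faults K i j"
  using assms heap_ancestors_bounds
  unfolding gadget_faults_def off_path_children_def by fastforce

lemma gadget_blocked_bounded:
  assumes "j < K" "d \<in> gadget_blocked K i j"
  shows "d < 4 * K"
  using assms heap_ancestors_bounds unfolding gadget_blocked_def by fastforce

lemma out_root_notin_gadget_blocked:
  assumes "K = 2 ^ h" "i < K"
  shows "1 \<notin> gadget_blocked K i j"
  using assms root_in_heap_ancestors[of h "K + i"] heap_ancestors_bounds
  unfolding gadget_blocked_def by auto

lemma in_root_in_gadget_blocked:
  assumes "K = 2 ^ h" "j < K"
  shows "2 * K + 1 \<in> gadget_blocked K i j"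
  using assms root_in_heap_ancestors[of h "K + j"] unfolding gadget_blocked_def by auto

lemma gadget_blocked_closed:
  assumes K: "K = 2 ^ h" and ij: "i < K" "j < K" "(i, j) \<notin> B"
    and e: "(a, d) \<in> gadget_edges K B - gadget_faults K i j" and d: "d \<in> gadget_blocked K i j"
  shows "a \<in> gadget_blocked K i j"
proof -
  have not_fault: "(a, d) \<notin> gadget_faults K i j" using e by simp
  from e have "(a, d) \<in> gadget_edges K B" by simp
  then consider
      (out_tree) s where "2 \<le> s" "s < 2 * K" "a = s div 2" "d = s"
    | (in_tree) s where "2 \<le> s" "s < 2 * K" "a = 2 * K + s" "d = 2 * K + s div 2"
    | (bypass_out) "a = 1" "d = 0"
    | (bypass_in) "a = 0" "d = 2 * K + 1"
    | (hub) "a = 2 * K + 1"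
    | (bit) i' j' where "(i', j') \<in> B" "i' < K" "j' < K" "a = K + i'" "d = 2 * K + (K + j')"
    unfolding gadget_edges_def by blast
  then show ?thesis
  proof cases
    case out_tree
    then have "s \<notin> heap_ancestors (K + i)" using d unfolding gadget_blocked_def by auto
    then have "a \<notin> heap_ancestors (K + i)"
      using not_fault out_tree unfolding gadget_faults_def off_path_children_def by auto
    then show ?thesis using out_tree unfolding gadget_blocked_def by auto
  next
    case in_tree
    then have "s div 2 \<in> heap_ancestors (K + j)" using d unfolding gadget_blocked_def by auto
    then have "s \<in> heap_ancestors (K + j)"
      using not_fault in_tree unfolding gadget_faults_def off_path_children_def by auto
    then show ?thesis using in_tree unfolding gadget_blocked_def by auto
  next
    case bypass_out
    then show ?thesis using not_fault unfolding gadget_faults_def by simp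
  next
    case bypass_in
    then show ?thesis using K heap_ancestors_bounds unfolding gadget_blocked_def by fastforce
  next
    case hub
    then show ?thesis using in_root_in_gadget_blocked[OF K ij(2)] by simp
  next
    case bit
    then have "K + j' \<in> heap_ancestors (K + j)" using d unfolding gadget_blocked_def by auto
    then have "j' = j" using heap_ancestors_leaf[of "K + j'" "K + j" K] ij by simp
    then have "K + i' \<notin> heap_ancestors (K + i)"
      using bit ij heap_ancestors_leaf[of "K + i'" "K + i" K] by auto
    then show ?thesis using bit unfolding gadget_blocked_def by auto
  qed
qed

section \<open>The code graphs\<close>

definition gadget_vertex :: "nat \<Rightarrow> nat \<Rightarrow> nat \<Rightarrow> nat" where
  "gadget_vertex K c d = Suc (c * (4 * K) + d)"

lemma gadget_vertex_nonzero [simp]: "gadget_vertex K c d \<noteq> 0"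
  unfolding gadget_vertex_def by simp

lemma gadget_vertex_eq_iff:
  assumes "d < 4 * K" "d' < 4 * K"
  shows "gadget_vertex K c d = gadget_vertex K c' d' \<longleftrightarrow> c = c' \<and> d = d'"
proof
  assume eq: "gadget_vertex K c d = gadget_vertex K c' d'"
  have "c = (c * (4 * K) + d) div (4 * K)" "c' = (c' * (4 * K) + d') div (4 * K)"
    using assms by simp_all
  then have "c = c'" using eq unfolding gadget_vertex_def by simp
  then show "c = c' \<and> d = d'" using eq unfolding gadget_vertex_def by simp
qed simp

lemma gadget_vertex_le:
  assumes "c < P" "d < 4 * K"
  shows "gadget_vertex K c d \<le> P * (4 * K)"
proof -
  have "Suc c * (4 * K) \<le> P * (4 * K)" using assms(1) by (intro mult_right_mono) auto
  then show ?thesis using assms(2) unfolding gadget_vertex_def by simp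
qed

lemma gadget_vertex_cases:
  assumes "0 < u" "u \<le> P * (4 * K)"
  obtains c d where "c < P" "d < 4 * K" "u = gadget_vertex K c d"
proof
  have "0 < K" using assms by (cases "K = 0") auto
  show "(u - 1) div (4 * K) < P" using assms \<open>0 < K\<close> by (simp add: div_less_iff_less_mult)
  show "(u - 1) mod (4 * K) < 4 * K" using \<open>0 < K\<close> by simp
  show "u = gadget_vertex K ((u - 1) div (4 * K)) ((u - 1) mod (4 * K))"
    using assms(1) div_mult_mod_eq[of "u - 1" "4 * K"] unfolding gadget_vertex_def by simp
qed

definition lift_gadget :: "nat \<Rightarrow> nat \<Rightarrow> (nat \<times> nat) set \<Rightarrow> (nat \<times> nat) set" where
  "lift_gadget K c R = map_prod (gadget_vertex K c) (gadget_vertex K c) ` R"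

lemma lift_gadget_zero [simp]: "(0, v) \<notin> lift_gadget K c R" "(u, 0) \<notin> lift_gadget K c R"
  unfolding lift_gadget_def by auto

lemma lift_gadget_mem_iff:
  assumes "R \<subseteq> {..<4 * K} \<times> {..<4 * K}" "a < 4 * K" "b < 4 * K"
  shows "(gadget_vertex K c' a, gadget_vertex K c' b) \<in> lift_gadget K c R \<longleftrightarrow> c' = c \<and> (a, b) \<in> R"
  using assms unfolding lift_gadget_def by (force simp: gadget_vertex_eq_iff)

lemma rtrancl_lift_gadget:
  "(a, b) \<in> R\<^sup>* \<Longrightarrow> (gadget_vertex K c a, gadget_vertex K c b) \<in> (lift_gadget K c R)\<^sup>*"
  by (induction rule: rtrancl_induct) (auto simp: lift_gadget_def intro: rtrancl_into_rtrancl)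

definition gadget_bits :: "(nat \<times> nat \<times> nat) set \<Rightarrow> nat \<Rightarrow> (nat \<times> nat) set" where
  "gadget_bits S c = {(i, j). (c, i, j) \<in> S}"

definition code_graph :: "nat \<Rightarrow> nat \<Rightarrow> nat \<Rightarrow> (nat \<times> nat \<times> nat) set \<Rightarrow> (nat \<times> nat) set" where
  "code_graph n K P S =
     (\<Union>c<P. lift_gadget K c (gadget_edges K (gadget_bits S c)))
   \<union> {(u, 0) | u. 0 < u \<and> u < n}
   \<union> {(0, gadget_vertex K c 1) | c. c < P}
   \<union> {(0, u) | u. P * (4 * K) < u \<and> u < n}"

lemma digraph_code_graph:
  assumes "0 < K" "P * (4 * K) < n"
  shows "digraph n (code_graph n K P S)"
proof -
  have in_gadget: "a < 4 * K \<and> b < 4 * K" if "(a, b) \<in> gadget_edges K B" for a b B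
    using gadget_edges_bounded[OF assms(1)] that by blast
  have vertex: "gadget_vertex K c d < n" if "c < P" "d < 4 * K" for c d
    using gadget_vertex_le[OF that] assms(2) by simp
  have "lift_gadget K c (gadget_edges K B) \<subseteq> {0..<n} \<times> {0..<n}" if "c < P" for c B
    unfolding lift_gadget_def using in_gadget vertex[OF that] by auto
  moreover have "(v, v) \<notin> lift_gadget K c (gadget_edges K B)" for v c B
    unfolding lift_gadget_def using in_gadget gadget_edges_irrefl
    by (auto simp: gadget_vertex_eq_iff)
  moreover have "gadget_vertex K c 1 < n" if "c < P" for c
    using vertex[OF that] assms(1) by simp
  ultimately show ?thesis
    unfolding digraph_def code_graph_def using assms(2) by auto
qed

lemma gadget_edge_in_code_graph_residual:
  assumes "0 < K" "c' < P" "(a, b) \<in> gadget_edges K (gadget_bits S c')"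
    and "c' = c \<Longrightarrow> (a, b) \<notin> gadget_faults K i j"
  shows "(gadget_vertex K c' a, gadget_vertex K c' b)
           \<in> code_graph n K P S - lift_gadget K c (gadget_faults K i j)"
proof -
  have "(a, b) \<in> {..<4 * K} \<times> {..<4 * K}" "gadget_faults K i j \<subseteq> {..<4 * K} \<times> {..<4 * K}"
    using gadget_edges_bounded[OF assms(1)] assms(3) gadget_faults_subset[of K i j "{}"] by blast+
  then have "(gadget_vertex K c' a, gadget_vertex K c' b) \<notin> lift_gadget K c (gadget_faults K i j)"
    using assms(4) lift_gadget_mem_iff by auto
  moreover have "(gadget_vertex K c' a, gadget_vertex K c' b) \<in> code_graph n K P S"
    using assms(2,3) unfolding code_graph_def lift_gadget_def by auto
  ultimately show ?thesis by simp
qed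

lemma code_graph_residual_in_root_reachable:
  assumes K: "K = 2 ^ h" and c: "c < P" and ij: "i < K" "j < K" and bit: "(c, i, j) \<in> S"
    and c': "c' < P"
  shows "(gadget_vertex K c' 1, gadget_vertex K c' (2 * K + 1))
           \<in> (code_graph n K P S - lift_gadget K c (gadget_faults K i j))\<^sup>*"
proof -
  let ?R = "code_graph n K P S - lift_gadget K c (gadget_faults K i j)"
  note edge = gadget_edge_in_code_graph_residual[of K _ P _ _ S c i j n]
  have K0: "0 < K" using K by simp
  show ?thesis
  proof (cases "c' = c")
    case True
    have "lift_gadget K c (gadget_edges K (gadget_bits S c) - gadget_faults K i j) \<subseteq> ?R"
      unfolding lift_gadget_def[of K c "_ - _"] by (auto intro!: edge[OF K0 c])
    moreover have "(1, 2 * K + 1) \<in> (gadget_edges K (gadget_bits S c) - gadget_faults K i j)\<^sup>*"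
      using gadget_out_root_reaches_in_root[OF K ij] bit by (simp add: gadget_bits_def)
    ultimately show ?thesis using True rtrancl_lift_gadget rtrancl_mono by blast
  next
    case False
    have "(1, 0) \<in> gadget_edges K B" "(0, 2 * K + 1) \<in> gadget_edges K B" for B
      unfolding gadget_edges_def by auto
    then show ?thesis using edge[OF K0 c'] False by (meson r_into_rtrancl rtrancl_into_rtrancl)
  qed
qed

lemma code_graph_residual_hub_reaches_all:
  assumes K: "K = 2 ^ h" and c: "c < P" and ij: "i < K" "j < K" and bit: "(c, i, j) \<in> S"
    and w: "w < n"
  shows "(0, w) \<in> (code_graph n K P S - lift_gadget K c (gadget_faults K i j))\<^sup>*"
proof -
  let ?R = "code_graph n K P S - lift_gadget K c (gadget_faults K i j)"
  have K0: "0 < K" using K by simp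
  consider "w = 0" | "P * (4 * K) < w" | c' d where "c' < P" "d < 4 * K" "w = gadget_vertex K c' d"
    using gadget_vertex_cases by (metis not_le neq0_conv)
  then show ?thesis
  proof cases
    case 2
    then have "(0, w) \<in> ?R" using w unfolding code_graph_def by auto
    then show ?thesis by (rule r_into_rtrancl)
  next
    case 3
    have "(0, gadget_vertex K c' 1) \<in> ?R" using 3 unfolding code_graph_def by auto
    then have "(0, gadget_vertex K c' (2 * K + 1)) \<in> ?R\<^sup>*"
      using code_graph_residual_in_root_reachable[OF K c ij bit 3(1)]
      by (meson converse_rtrancl_into_rtrancl)
    moreover have "(gadget_vertex K c' (2 * K + 1), w) \<in> ?R" if "d \<noteq> 2 * K + 1"
      using gadget_edge_in_code_graph_residual[OF K0 3(1)] that 3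
        in_root_edge_notin_gadget_faults[OF K0]
      unfolding gadget_edges_def by auto
    ultimately show ?thesis using 3 by (cases "d = 2 * K + 1") (auto intro: rtrancl_into_rtrancl)
  qed simp
qed

lemma code_graph_minus_gadget_faults_connected:
  assumes K: "K = 2 ^ h" and c: "c < P" and ij: "i < K" "j < K" and bit: "(c, i, j) \<in> S"
    and uv: "u < n" "v < n"
  shows "(u, v) \<in> (code_graph n K P S - lift_gadget K c (gadget_faults K i j))\<^sup>*"
proof -
  let ?R = "code_graph n K P S - lift_gadget K c (gadget_faults K i j)"
  have "(u, 0) \<in> ?R\<^sup>*"
  proof (cases "u = 0")
    case False
    then have "(u, 0) \<in> ?R" using uv(1) unfolding code_graph_def by auto
    then show ?thesis by (rule r_into_rtrancl)
  qed simp
  then show ?thesis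
    using code_graph_residual_hub_reaches_all[OF K c ij bit uv(2)] by (rule rtrancl_trans)
qed

lemma code_graph_residual_blocked_closed:
  assumes K: "K = 2 ^ h" and c: "c < P" and ij: "i < K" "j < K" and no_bit: "(c, i, j) \<notin> S"
    and uv: "(u, v) \<in> code_graph n K P S - lift_gadget K c (gadget_faults K i j)"
      "v \<in> gadget_vertex K c ` gadget_blocked K i j"
  shows "u \<in> gadget_vertex K c ` gadget_blocked K i j"
proof -
  have K0: "0 < K" using K by simp
  obtain d where d: "d \<in> gadget_blocked K i j" "v = gadget_vertex K c d" using uv(2) by auto
  have d4: "d < 4 * K" using gadget_blocked_bounded[OF ij(2) d(1)] .
  from uv(1) consider
      (gadget) c' a b where "c' < P" "(a, b) \<in> gadget_edges K (gadget_bits S c')"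
        "u = gadget_vertex K c' a" "v = gadget_vertex K c' b"
    | "v = 0"
    | (from_hub) c' where "c' < P" "u = 0" "v = gadget_vertex K c' 1"
    | (padding) "P * (4 * K) < v"
    unfolding code_graph_def lift_gadget_def by auto
  then show ?thesis
  proof cases
    case gadget
    have "b < 4 * K" using gadget(2) gadget_edges_bounded[OF K0] by blast
    then have "c' = c" "b = d" using gadget(4) d(2) d4 gadget_vertex_eq_iff by auto
    moreover have "(a, d) \<notin> gadget_faults K i j"
      using uv(1) gadget calculation unfolding lift_gadget_def by auto
    ultimately have "a \<in> gadget_blocked K i j"
      using gadget_blocked_closed[OF K ij, of "gadget_bits S c" a d] gadget(2) d(1) no_bit
      by (simp add: gadget_bits_def)
    then show ?thesis using gadget \<open>c' = c\<close> by simp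
  next
    case from_hub
    then have "d = 1" using d(2) d4 gadget_vertex_eq_iff[of d K 1] K0 by auto
    then show ?thesis using d(1) out_root_notin_gadget_blocked[OF K ij(1)] by simp
  next
    case padding
    then show ?thesis using d(2) gadget_vertex_le[OF c d4] by simp
  qed (use d in simp)
qed

lemma code_graph_minus_gadget_faults_disconnected:
  assumes K: "K = 2 ^ h" and c: "c < P" and ij: "i < K" "j < K" and no_bit: "(c, i, j) \<notin> S"
  shows "(0, gadget_vertex K c (2 * K + 1))
           \<notin> (code_graph n K P S - lift_gadget K c (gadget_faults K i j))\<^sup>*"
proof
  let ?A = "gadget_vertex K c ` gadget_blocked K i j"
  assume "(0, gadget_vertex K c (2 * K + 1))
    \<in> (code_graph n K P S - lift_gadget K c (gadget_faults K i j))\<^sup>*"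
  moreover have "gadget_vertex K c (2 * K + 1) \<in> ?A"
    using in_root_in_gadget_blocked[OF K ij(2)] by simp
  ultimately have "0 \<in> ?A"
    using code_graph_residual_blocked_closed[OF K c ij no_bit] by (rule rtrancl_predecessor_closed)
  then show False by auto
qed

lemma is_FDO_distinguishes_code_graphs:
  assumes FDO: "is_FDO n f \<sigma> enc Q" and K: "K = 2 ^ h" and f: "2 * h + 1 \<le> f"
    and n: "P * (4 * K) < n" and c: "c < P" and ij: "i < K" "j < K"
    and bits: "(c, i, j) \<in> S" "(c, i, j) \<notin> S'"
  shows "enc (code_graph n K P S) \<noteq> enc (code_graph n K P S')"
proof (rule is_FDO_distinguishes[OF FDO])
  let ?F = "lift_gadget K c (gadget_faults K i j)"
  have K0: "0 < K" using K by simp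
  show "digraph n (code_graph n K P S)" "digraph n (code_graph n K P S')"
    using digraph_code_graph[OF K0 n] by auto
  have "?F \<subseteq> code_graph n K P T" for T
  proof -
    have "?F \<subseteq> lift_gadget K c (gadget_edges K (gadget_bits T c))"
      unfolding lift_gadget_def by (intro image_mono gadget_faults_subset)
    also have "\<dots> \<subseteq> code_graph n K P T" unfolding code_graph_def using c by blast
    finally show ?thesis .
  qed
  then show "?F \<subseteq> code_graph n K P S" "?F \<subseteq> code_graph n K P S'" by auto
  have "finite (gadget_faults K i j)"
    using gadget_faults_subset[of K i j "{}"] gadget_edges_bounded[OF K0]
    by (meson finite_SigmaI finite_lessThan finite_subset)
  then have "card ?F \<le> card (gadget_faults K i j)"
    unfolding lift_gadget_def by (rule card_image_le)
  then show "card ?F \<le> f" using card_gadget_faults[OF K ij] f by simp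
  show "diam_g n (code_graph n K P S - ?F) \<noteq> \<infinity>"
    using code_graph_minus_gadget_faults_connected[OF K c ij bits(1)]
    by (simp add: diam_g_eq_infinity_iff)
  have "0 < n" "gadget_vertex K c (2 * K + 1) < n"
    using gadget_vertex_le[OF c, of "2 * K + 1" K] K0 n by simp_all
  then show "diam_g n (code_graph n K P S' - ?F) = \<infinity>"
    unfolding diam_g_eq_infinity_iff
    using code_graph_minus_gadget_faults_disconnected[OF K c ij bits(2)] by blast
qed

lemma is_FDO_encoding_length:
  assumes FDO: "is_FDO n f \<sigma> enc Q" and K: "K = 2 ^ h" and f: "2 * h + 1 \<le> f"
    and n: "P * (4 * K) < n"
  shows "\<exists>E. digraph n E \<and> P * K * K \<le> length (enc E)"
proof -
  let ?D = "{..<P} \<times> {..<K} \<times> {..<K}"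
  let ?code = "\<lambda>S. enc (code_graph n K P S)"
  have subset: "S \<subseteq> S'" if S: "S \<subseteq> ?D" and eq: "?code S = ?code S'" for S S'
  proof
    fix t
    assume "t \<in> S"
    then obtain c i j where "t = (c, i, j)" "c < P" "i < K" "j < K" using S by auto
    then show "t \<in> S'"
      using is_FDO_distinguishes_code_graphs[OF FDO K f n, of c i j S S'] eq \<open>t \<in> S\<close> by blast
  qed
  have inj: "inj_on ?code (Pow ?D)"
  proof (rule inj_onI)
    fix S S'
    assume S: "S \<in> Pow ?D" and S': "S' \<in> Pow ?D" and eq: "?code S = ?code S'"
    show "S = S'"
      using subset[OF PowD[OF S] eq] subset[OF PowD[OF S'] eq[symmetric]] by (rule subset_antisym)
  qed
  have card: "card (Pow ?D) = 2 ^ (P * K * K)" by (simp add: card_Pow card_cartesian_product)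
  obtain S where "S \<in> Pow ?D" "P * K * K \<le> length (?code S)"
    using inj_on_bool_list_long[OF inj card] by blast
  moreover have "digraph n (code_graph n K P S)" using digraph_code_graph[OF _ n] K by simp
  ultimately show ?thesis by blast
qed

section \<open>The space bound\<close>

text \<open>The height is capped both by the fault budget and by the number of vertices; whichever
  cap is attained gives one of the two alternatives.\<close>

lemma exists_gadget_height:
  fixes n f :: nat
  assumes "9 \<le> n" "1 \<le> f"
  obtains h where "8 * 2 ^ h < n" "2 * h + 1 \<le> f"
    "2 powr (real f / 2) \<le> 2 * 2 ^ h \<or> n \<le> 16 * 2 ^ h"
proof -
  define m where "m = (n - 1) div 8"
  define h where "h = min ((f - 1) div 2) (floor_log m)"
  have "0 < m" using assms(1) unfolding m_def by simp
  have "(2::nat) ^ h \<le> 2 ^ floor_log m" unfolding h_def by (intro power_increasing) auto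
  also have "\<dots> \<le> m" using floor_log_exp2_le[OF \<open>0 < m\<close>] .
  finally have "8 * 2 ^ h < n" using assms(1) unfolding m_def by linarith
  moreover have "2 * h + 1 \<le> f" using assms(2) unfolding h_def by linarith
  moreover have "2 powr (real f / 2) \<le> 2 * 2 ^ h \<or> n \<le> 16 * 2 ^ h"
  proof (cases "h = (f - 1) div 2")
    case True
    then have "real f / 2 \<le> real (h + 1)" by linarith
    then have "2 powr (real f / 2) \<le> 2 powr real (h + 1)" by (rule powr_mono) simp
    also have "\<dots> = 2 * 2 ^ h" using powr_realpow[of 2 "h + 1"] by simp
    finally show ?thesis ..
  next
    case False
    then have "m < 2 * 2 ^ h" using floor_log_exp2_gt[of m] unfolding h_def by linarith
    then show ?thesis unfolding m_def by linarith
  qed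
  ultimately show ?thesis using that by blast
qed

lemma gadget_count_bound:
  fixes x C :: real
  assumes K: "0 < K" "8 * K < n" and C: "0 \<le> C" and x: "0 \<le> x" "x \<le> C * real n"
    and small: "x \<le> 2 * real K \<or> n \<le> 16 * K"
  shows "x * real n \<le> 256 * (C + 1) * real ((n - 1) div (4 * K) * K * K)"
proof -
  define P where "P = (n - 1) div (4 * K)"
  have "1 \<le> P" unfolding P_def using K by (simp add: div_greater_zero_iff Suc_le_eq)
  have "n - 1 = P * (4 * K) + (n - 1) mod (4 * K)"
    unfolding P_def by (rule div_mult_mod_eq[symmetric])
  moreover have "(n - 1) mod (4 * K) < 4 * K" using K(1) by simp
  moreover have "K \<le> K * P" using \<open>1 \<le> P\<close> by simp
  moreover have "P * (4 * K) = 4 * (K * P)" "8 * K * P = 8 * (K * P)" by simp_all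
  ultimately have "n \<le> 8 * K * P" by linarith
  then have n_le: "real n \<le> 8 * real K * real P" using of_nat_mono by fastforce
  have PKK: "0 \<le> real (P * K * K)" by simp
  from small have "x * real n \<le> 256 * (C + 1) * real (P * K * K)"
  proof
    assume "x \<le> 2 * real K"
    then have "x * real n \<le> (2 * real K) * (8 * real K * real P)"
      using n_le x(1) by (intro mult_mono) auto
    also have "\<dots> = 16 * real (P * K * K)" by simp
    also have "\<dots> \<le> 256 * (C + 1) * real (P * K * K)"
      using C PKK by (intro mult_right_mono) auto
    finally show ?thesis .
  next
    assume "n \<le> 16 * K"
    then have n16: "real n \<le> 16 * real K" using of_nat_mono by fastforce
    have "x * real n \<le> (C * real n) * real n" using x by (intro mult_right_mono) auto
    also have "\<dots> \<le> (C * (16 * real K)) * (16 * real K)"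
      using n16 C by (intro mult_mono mult_left_mono) auto
    also have "\<dots> = 256 * C * real (K * K)" by simp
    also have "\<dots> \<le> 256 * (C + 1) * real (P * K * K)"
      using C mult_le_mono1[OF \<open>1 \<le> P\<close>, of "K * K"]
      by (intro mult_mono of_nat_mono) (auto simp: mult.assoc)
    finally show ?thesis .
  qed
  then show ?thesis unfolding P_def .
qed

lemma FDO_space_lower_bound:
  fixes C :: real
  assumes "0 \<le> C" "9 \<le> n" "1 \<le> f" "2 powr (real f / 2) \<le> C * real n"
    and "is_FDO n f \<sigma> enc Q"
  shows "\<exists>E. digraph n E \<and> 2 powr (real f / 2) * real n \<le> 256 * (C + 1) * real (length (enc E))"
proof -
  obtain h where h: "8 * 2 ^ h < n" "2 * h + 1 \<le> f"
    "2 powr (real f / 2) \<le> 2 * 2 ^ h \<or> n \<le> 16 * 2 ^ h"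
    using exists_gadget_height[OF assms(2,3)] .
  define K :: nat where "K = 2 ^ h"
  define P where "P = (n - 1) div (4 * K)"
  have "P * (4 * K) < n"
    unfolding P_def using div_times_less_eq_dividend[of "n - 1" "4 * K"] h(1) by linarith
  obtain E where E: "digraph n E" "P * K * K \<le> length (enc E)"
    using is_FDO_encoding_length[OF assms(5) K_def h(2) \<open>P * (4 * K) < n\<close>] by blast
  have "2 powr (real f / 2) * real n \<le> 256 * (C + 1) * real (P * K * K)"
    unfolding P_def using gadget_count_bound[of K n C "2 powr (real f / 2)"] h(1,3) assms(1,4)
    by (simp add: K_def)
  also have "\<dots> \<le> 256 * (C + 1) * real (length (enc E))"
    using E(2) assms(1) by (intro mult_left_mono of_nat_mono) auto
  finally show ?thesis using E(1) by blast
qed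

theorem theorem4:
  shows "\<forall>C > 0. \<exists>c > (0::real). \<exists>N::nat. \<forall>(n::nat) (f::nat) (\<sigma>::real)
           (enc :: (nat \<times> nat) set \<Rightarrow> bool list) (Q :: bool list \<Rightarrow> (nat \<times> nat) set \<Rightarrow> ereal).
           n \<ge> N \<and> n \<ge> 1 \<and> f \<ge> 1 \<and> 2 powr (real f / 2) \<le> C * real n \<and> \<sigma> \<ge> 1 \<and>
           is_FDO n f \<sigma> enc Q
           \<longrightarrow> (\<exists>E. digraph n E \<and> c * 2 powr (real f / 2) * real n \<le> real (length (enc E)))"
proof (intro allI impI)
  fix C :: real
  assume "0 < C"
  show "\<exists>c > (0::real). \<exists>N::nat. \<forall>(n::nat) (f::nat) (\<sigma>::real)
           (enc :: (nat \<times> nat) set \<Rightarrow> bool list) (Q :: bool list \<Rightarrow> (nat \<times> nat) set \<Rightarrow> ereal).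
           n \<ge> N \<and> n \<ge> 1 \<and> f \<ge> 1 \<and> 2 powr (real f / 2) \<le> C * real n \<and> \<sigma> \<ge> 1 \<and>
           is_FDO n f \<sigma> enc Q
           \<longrightarrow> (\<exists>E. digraph n E \<and> c * 2 powr (real f / 2) * real n \<le> real (length (enc E)))"
  proof (intro exI[of _ "1 / (256 * (C + 1))"] conjI exI[of _ "9 :: nat"] allI impI)
    show "0 < 1 / (256 * (C + 1))" using \<open>0 < C\<close> by simp
    fix n f :: nat and \<sigma> :: real and enc :: "(nat \<times> nat) set \<Rightarrow> bool list"
      and Q :: "bool list \<Rightarrow> (nat \<times> nat) set \<Rightarrow> ereal"
    assume "9 \<le> n \<and> 1 \<le> n \<and> 1 \<le> f \<and> 2 powr (real f / 2) \<le> C * real n \<and> 1 \<le> \<sigma> \<and>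
      is_FDO n f \<sigma> enc Q"
    moreover have "0 \<le> C" using \<open>0 < C\<close> by simp
    ultimately obtain E where "digraph n E"
      "2 powr (real f / 2) * real n \<le> 256 * (C + 1) * real (length (enc E))"
      using FDO_space_lower_bound[of C n f \<sigma> enc Q] by blast
    then show "\<exists>E. digraph n E \<and>
      1 / (256 * (C + 1)) * 2 powr (real f / 2) * real n \<le> real (length (enc E))"
      using \<open>0 < C\<close> by (auto simp: field_simps)
  qed
qed

end
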